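(* Let $\mathbf A\in\mathbb R^{m\times n}$ be a nonzero matrix of rank $r$ (full column rank or rank deficient) with smallest nonzero singular value $\sigma_r(\mathbf A)$, and let $\mathbf b\in\mathbb R^m$ be such that $\mathbf A\mathbf x=\mathbf b$ is consistent. Fix a row partition $\{\mathcal I_1,\dots,\mathcal I_s\}$ of $[m]$ and a column partition $\{\mathcal J_1,\dots,\mathcal J_t\}$ of $[n]$, let $\beta=\max_{(\mathcal I,\mathcal J)\in\mathcal P}\|\mathbf A_{\mathcal I,\mathcal J}\|_2^2/\|\mathbf A_{\mathcal I,\mathcal J}\|_F^2$ and $\rho=\max_{1\le j\le t}\sigma_1^2(\mathbf A_{:,\mathcal J_j})$. Let $\mathbf x^0\in\mathbb R^n$ be arbitrary and let $\mathbf x^k$ be the $k$th iterate of the doubly stochastic block Gauss--Seidel (DSBGS) algorithm with step size $\alpha$ described in the context. Then: (i) if $t=n$ and $0<\alpha<2\sigma_r^2(\mathbf A)/(\beta\|\mathbf A\|_F^2)$, then for every $k\ge0$ $$\mathbb E\big[\|\mathbf A\mathbf x^k-\mathbf b\|_2^2\big]\le\Big(1+\beta\alpha^2-\frac{2\alpha\sigma_r^2(\mathbf A)}{\|\mathbf A\|_F^2}\Big)^k\|\mathbf A\mathbf x^0-\mathbf b\|_2^2;$$ (ii) if $t<n$ and $0<\alpha<2\sigma_r^2(\mathbf A)/(t\rho\beta)$, then for every $k\ge0$ $$\mathbb E\big[\|\mathbf A\mathbf x^k-\mathbf b\|_2^2\big]\le\Big(1-\frac{2\alpha\sigma_r^2(\mathbf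 A)-t\rho\beta\alpha^2}{\|\mathbf A\|_F^2}\Big)^k\|\mathbf A\mathbf x^0-\mathbf b\|_2^2.$$
   Context: Notation: $\|\cdot\|_F$ the Frobenius norm, $\|\cdot\|_2$ the Euclidean norm for vectors and spectral norm for matrices, $\sigma_1(\cdot)$ the largest singular value. For $\mathcal I\subseteq[m]=\{1,\dots,m\}$ and $\mathcal J\subseteq[n]$, $\mathbf A_{\mathcal I,\mathcal J}$ is the submatrix of $\mathbf A$ with rows indexed by $\mathcal I$ and columns indexed by $\mathcal J$; $\mathbf A_{:,\mathcal J}$ is the column submatrix indexed by $\mathcal J$; $\mathbf I_{:,\mathcal J}$ denotes the columns of the identity matrix (of the appropriate order) indexed by $\mathcal J$. DSBGS algorithm: the sets $\mathcal I_1,\dots,\mathcal I_s$ are nonempty, pairwise disjoint with union $[m]$, and $\mathcal J_1,\dots,\mathcal J_t$ are nonempty, pairwise disjoint with union $[n]$; $\mathcal P=\{\mathcal I_1,\dots,\mathcal I_s\}\times\{\mathcal J_1,\dots,\mathcal J_t\}$ (in the definition of $\beta$ the maximum is over blocks with $\mathbf A_{\mathcal I,\mathcal J}\neq0$). Given $\alpha>0$ and $\mathbf x^0$, for $k=1,2,\dots$: pick $(\mathcal I,\mathcal J)\in\mathcal P$ (independently of previous choices) with probability $\|\mathbf A_{\mathcal I,\mathcal J}\|_F^2/\|\mathbf A\|_F^2$, and set $$\mathbf x^k=\mathbf x^{k-1}-\alpha\,\frac{\mathbf I_{:,\mathcal J}(\mathbf A_{\mathcal I,\mathcal J})^{T}(\mathbf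 I_{:,\mathcal I})^{T}}{\|\mathbf A_{\mathcal I,\mathcal J}\|_F^2}\,(\mathbf A\mathbf x^{k-1}-\mathbf b).$$ The expectation $\mathbb E$ is over the random choices of the blocks. *)

theory Defs
  imports "HOL-Analysis.Analysis" "HOL-Probability.Probability" "HOL-Library.Disjoint_Sets"
begin

text \<open>Matrices are elements of real^'n^'m (m rows indexed by the finite type 'm,
 n columns indexed by the finite type 'n).\<close>

definition frob_norm :: "real^'n^'m \<Rightarrow> real" where
  "frob_norm A = sqrt (\<Sum>i\<in>UNIV. \<Sum>j\<in>UNIV. (A $ i $ j)^2)"

definition singular_values :: "real^'n^'m \<Rightarrow> real set" where
  "singular_values A =
     sqrt ` {lam. \<exists>v. v \<noteq> 0 \<and> (transpose A ** A) *v v = lam *\<^sub>R v}"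

text \<open>Largest singular value (= spectral norm).\<close>
definition sigma_max :: "real^'n^'m \<Rightarrow> real" where
  "sigma_max A = Max (singular_values A)"

definition sigma_min_nz :: "real^'n^'m \<Rightarrow> real" where
  "sigma_min_nz A = Min (singular_values A - {0})"

text \<open>The block A_{I,J}, represented as the m x n matrix that agrees with A on
 I x J and is zero elsewhere (zero padding does not change the Frobenius norm,
 the spectral norm or the nonzero singular values).  In particular
 I_{:,J} (A_{I,J})^T (I_{:,I})^T = transpose (block A I J).\<close>
definition block :: "real^'n^'m \<Rightarrow> 'm set \<Rightarrow> 'n set \<Rightarrow> real^'n^'m" where
  "block A I J = (\<chi> i j. if i \<in> I \<and> j \<in> J then A $ i $ j else 0)"

definition dsbgs_beta :: "real^'n^'m \<Rightarrow> 'm set set \<Rightarrow> 'n set set \<Rightarrow> real" where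
  "dsbgs_beta A RP CP =
     Max {(sigma_max (block A I J))^2 / (frob_norm (block A I J))^2
          | I J. I \<in> RP \<and> J \<in> CP \<and> block A I J \<noteq> 0}"

definition dsbgs_rho :: "real^'n^'m \<Rightarrow> 'n set set \<Rightarrow> real" where
  "dsbgs_rho A CP = Max {(sigma_max (block A UNIV J))^2 | J. J \<in> CP}"

definition block_pmf :: "real^'n^'m \<Rightarrow> 'm set set \<Rightarrow> 'n set set \<Rightarrow> ('m set \<times> 'n set) pmf" where
  "block_pmf A RP CP = embed_pmf (\<lambda>(I, J).
     if I \<in> RP \<and> J \<in> CP then (frob_norm (block A I J))^2 / (frob_norm A)^2 else 0)"

definition dsbgs_step :: "real^'n^'m \<Rightarrow> real^'m \<Rightarrow> real \<Rightarrow> 'm set \<Rightarrow> 'n set \<Rightarrow> real^'n \<Rightarrow> real^'n" where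
  "dsbgs_step A b \<alpha> I J x =
     x - (\<alpha> / (frob_norm (block A I J))^2) *\<^sub>R (transpose (block A I J) *v (A *v x - b))"

primrec dsbgs_iter :: "real^'n^'m \<Rightarrow> real^'m \<Rightarrow> 'm set set \<Rightarrow> 'n set set \<Rightarrow> real
     \<Rightarrow> real^'n \<Rightarrow> nat \<Rightarrow> (real^'n) pmf" where
  "dsbgs_iter A b RP CP \<alpha> x0 0 = return_pmf x0"
| "dsbgs_iter A b RP CP \<alpha> x0 (Suc k) =
     bind_pmf (dsbgs_iter A b RP CP \<alpha> x0 k)
       (\<lambda>x. map_pmf (\<lambda>(I, J). dsbgs_step A b \<alpha> I J x) (block_pmf A RP CP))"

end

theory Submission
  imports Defs
begin

text \<open>Write \<open>r = A x - b\<close>. A step with block \<open>(I, J)\<close> replaces \<open>r\<close> by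
  \<open>r - (\<alpha> / \<parallel>A\<^sub>I\<^sub>J\<parallel>\<^sub>F\<^sup>2) A A\<^sub>I\<^sub>J\<^sup>T r\<close>. Weighting the expanded square with the
  probability \<open>\<parallel>A\<^sub>I\<^sub>J\<parallel>\<^sub>F\<^sup>2 / \<parallel>A\<parallel>\<^sub>F\<^sup>2\<close> and summing over both partitions, the cross
  terms add up to \<open>-2 \<alpha> \<parallel>A\<^sup>T r\<parallel>\<^sup>2 / \<parallel>A\<parallel>\<^sub>F\<^sup>2\<close>, and \<open>\<parallel>A\<^sup>T r\<parallel> \<ge> \<sigma>\<^sub>r \<parallel>r\<parallel>\<close> because
  consistency puts \<open>r\<close> into the range of \<open>A\<close>. The quadratic term of a block is at most
  \<open>\<alpha>\<^sup>2 \<beta> g\<^sub>J \<parallel>r\<^sub>I\<parallel>\<^sup>2 / \<parallel>A\<parallel>\<^sub>F\<^sup>2\<close>, where \<open>g\<^sub>J\<close> bounds \<open>\<parallel>A y\<parallel>\<^sup>2 / \<parallel>y\<parallel>\<^sup>2\<close> for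
  \<open>y\<close> supported in \<open>J\<close>. Taking for \<open>g\<^sub>J\<close> the squared Frobenius norm of the columns \<open>J\<close>
  of \<open>A\<close> (which sum to \<open>\<parallel>A\<parallel>\<^sub>F\<^sup>2\<close>) gives rate (i), and \<open>g\<^sub>J = \<rho>\<close> gives rate (ii).
  So one step contracts the expected squared residual by the rate, and iterating proves
  the claim.

  The spectral estimates rest on one fact: an extremum of the Rayleigh quotient of \<open>D\<close>
  on a subspace that is invariant under \<open>D\<^sup>T D\<close> is an eigenvalue of \<open>D\<^sup>T D\<close>.\<close>

lemma inner_matrix_vector_transpose:
  fixes C :: "real^'n^'m"
  shows "inner (C *v x) y = inner x (transpose C *v y)"
  by (metis dot_lmul_matrix vector_transpose_matrix)

lemma inner_gram_matrix:
  fixes C :: "real^'n^'m"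
  shows "inner ((transpose C ** C) *v v) u = inner (C *v v) (C *v u)"
  by (simp add: matrix_vector_mul_assoc inner_matrix_vector_transpose inner_commute)

lemma norm_add_scaleR_sq:
  fixes a b :: "'a::real_inner"
  shows "(norm (a + t *\<^sub>R b))^2 = (norm a)^2 + 2 * t * inner a b + t^2 * (norm b)^2"
  unfolding power2_norm_eq_inner
  by (simp add: inner_commute algebra_simps power2_eq_square)

lemma linear_coeff_zero_if_quadratic_nonneg:
  fixes a b :: real
  assumes "\<And>t. 0 \<le> a * t + b * t^2"
  shows "a = 0"
proof (rule ccontr)
  assume "a \<noteq> 0"
  define c where "c = \<bar>b\<bar> + 1"
  have c: "c > 0" "b < c" unfolding c_def by auto
  have "0 \<le> a * (-a/c) + b * (-a/c)^2" using assms by blast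
  also have "\<dots> = (a^2/c^2) * (b - c)"
    using c by (simp add: field_simps power2_eq_square)
  also have "\<dots> < 0"
    using \<open>a \<noteq> 0\<close> c by (intro mult_pos_neg) auto
  finally show False by simp
qed

text \<open>Perturbing \<open>w\<close> within \<open>W\<close> gives a quadratic in the step length that never changes
  sign, so its linear coefficient \<open>2 s \<langle>(D\<^sup>T D - l) w, u\<rangle>\<close> vanishes for all \<open>u \<in> W\<close>;
  invariance puts \<open>(D\<^sup>T D - l) w\<close> itself into \<open>W\<close>.\<close>
lemma rayleigh_extremum_eigenvector:
  fixes D :: "real^'a^'b"
  assumes W: "subspace W" and "w \<in> W"
    and extremal: "\<And>x. x \<in> W \<Longrightarrow> 0 \<le> s * ((norm (D *v x))^2 - l * (norm x)^2)"
    and attained: "(norm (D *v w))^2 = l * (norm w)^2"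
    and invariant: "(transpose D ** D) *v w \<in> W" and "s \<noteq> 0"
  shows "(transpose D ** D) *v w = l *\<^sub>R w"
proof -
  have orth: "inner ((transpose D ** D) *v w - l *\<^sub>R w) u = 0" if "u \<in> W" for u
  proof -
    have "0 \<le> (2 * s * (inner (D *v w) (D *v u) - l * inner w u)) * t
        + (s * ((norm (D *v u))^2 - l * (norm u)^2)) * t^2" for t
    proof -
      have "w + t *\<^sub>R u \<in> W"
        using W \<open>w \<in> W\<close> \<open>u \<in> W\<close> by (simp add: subspace_add subspace_scale)
      then have "0 \<le> s * ((norm (D *v (w + t *\<^sub>R u)))^2 - l * (norm (w + t *\<^sub>R u))^2)"
        by (rule extremal)
      also have "\<dots> = (2 * s * (inner (D *v w) (D *v u) - l * inner w u)) * t
          + (s * ((norm (D *v u))^2 - l * (norm u)^2)) * t^2"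
        using attained
        by (simp add: norm_add_scaleR_sq algebra_simps)
      finally show ?thesis .
    qed
    then have "2 * s * (inner (D *v w) (D *v u) - l * inner w u) = 0"
      by (rule linear_coeff_zero_if_quadratic_nonneg)
    then show ?thesis
      using \<open>s \<noteq> 0\<close> by (simp add: inner_diff_left inner_gram_matrix)
  qed
  have "(transpose D ** D) *v w - l *\<^sub>R w \<in> W"
    using W \<open>w \<in> W\<close> invariant by (simp add: subspace_diff subspace_scale)
  from orth[OF this] show ?thesis by simp
qed

lemma norm_matrix_vector_sq_normalize:
  fixes D :: "real^'a^'b"
  assumes "x \<noteq> 0"
  shows "(norm (D *v x))^2 = (norm (D *v (x /\<^sub>R norm x)))^2 * (norm x)^2"
proof -
  have "norm (D *v (x /\<^sub>R norm x)) * norm x = norm (D *v x)"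
    using assms by (simp add: matrix_vector_mult_scaleR)
  then show ?thesis by (simp only: power_mult_distrib[symmetric])
qed

lemma unit_sphere_subspace:
  assumes "subspace W" "x \<in> W" "x \<noteq> 0"
  shows "x /\<^sub>R norm x \<in> W \<inter> sphere 0 1"
  using assms by (simp add: subspace_scale)

lemma compact_subspace_unit_sphere:
  fixes W :: "'a::euclidean_space set"
  assumes "subspace W"
  shows "compact (W \<inter> sphere 0 1)"
  using closed_subspace[OF assms] by (intro closed_Int_compact) simp_all

lemma rayleigh_max_attained:
  fixes D :: "real^'a^'b"
  assumes W: "subspace W" and "u \<in> W" "u \<noteq> 0"
  obtains w where "w \<in> W" "norm w = 1"
    "\<And>x. x \<in> W \<Longrightarrow> (norm (D *v x))^2 \<le> (norm (D *v w))^2 * (norm x)^2"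
proof -
  have "compact (W \<inter> sphere 0 1)"
    using W by (rule compact_subspace_unit_sphere)
  moreover have "W \<inter> sphere 0 1 \<noteq> {}"
    using unit_sphere_subspace[OF assms] by blast
  moreover have "continuous_on (W \<inter> sphere 0 1) (\<lambda>x. (norm (D *v x))^2)"
    by (intro continuous_intros)
  ultimately obtain w where w: "w \<in> W \<inter> sphere 0 1"
    and max: "\<And>y. y \<in> W \<inter> sphere 0 1 \<Longrightarrow> (norm (D *v y))^2 \<le> (norm (D *v w))^2"
    using continuous_attains_sup[of "W \<inter> sphere 0 1" "\<lambda>x. (norm (D *v x))^2"] by blast
  have "(norm (D *v x))^2 \<le> (norm (D *v w))^2 * (norm x)^2" if "x \<in> W" for x
  proof (cases "x = 0")
    case False
    have "(norm (D *v (x /\<^sub>R norm x)))^2 \<le> (norm (D *v w))^2"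
      using max unit_sphere_subspace[OF W that False] by blast
    then have "(norm (D *v (x /\<^sub>R norm x)))^2 * (norm x)^2 \<le> (norm (D *v w))^2 * (norm x)^2"
      by (rule mult_right_mono) simp
    then show ?thesis by (simp only: norm_matrix_vector_sq_normalize[OF False, symmetric])
  qed simp
  with w that show thesis by auto
qed

lemma rayleigh_min_attained:
  fixes D :: "real^'a^'b"
  assumes W: "subspace W" and "u \<in> W" "u \<noteq> 0"
  obtains w where "w \<in> W" "norm w = 1"
    "\<And>x. x \<in> W \<Longrightarrow> (norm (D *v w))^2 * (norm x)^2 \<le> (norm (D *v x))^2"
proof -
  have "compact (W \<inter> sphere 0 1)"
    using W by (rule compact_subspace_unit_sphere)
  moreover have "W \<inter> sphere 0 1 \<noteq> {}"
    using unit_sphere_subspace[OF assms] by blast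
  moreover have "continuous_on (W \<inter> sphere 0 1) (\<lambda>x. (norm (D *v x))^2)"
    by (intro continuous_intros)
  ultimately obtain w where w: "w \<in> W \<inter> sphere 0 1"
    and min: "\<And>y. y \<in> W \<inter> sphere 0 1 \<Longrightarrow> (norm (D *v w))^2 \<le> (norm (D *v y))^2"
    using continuous_attains_inf[of "W \<inter> sphere 0 1" "\<lambda>x. (norm (D *v x))^2"] by blast
  have "(norm (D *v w))^2 * (norm x)^2 \<le> (norm (D *v x))^2" if "x \<in> W" for x
  proof (cases "x = 0")
    case False
    have "(norm (D *v w))^2 \<le> (norm (D *v (x /\<^sub>R norm x)))^2"
      using min unit_sphere_subspace[OF W that False] by blast
    then have "(norm (D *v w))^2 * (norm x)^2 \<le> (norm (D *v (x /\<^sub>R norm x)))^2 * (norm x)^2"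
      by (rule mult_right_mono) simp
    then show ?thesis by (simp only: norm_matrix_vector_sq_normalize[OF False, symmetric])
  qed simp
  with w that show thesis by auto
qed

definition gram_eigenvalues :: "real^'n^'m \<Rightarrow> real set" where
  "gram_eigenvalues C = {l. \<exists>v. v \<noteq> 0 \<and> (transpose C ** C) *v v = l *\<^sub>R v}"

lemma singular_values_eq_sqrt_gram_eigenvalues:
  "singular_values C = sqrt ` gram_eigenvalues C"
  by (simp add: singular_values_def gram_eigenvalues_def)

lemma gram_eigenvalue_nonneg:
  assumes "l \<in> gram_eigenvalues C"
  shows "0 \<le> l"
proof -
  obtain v where v: "v \<noteq> 0" "(transpose C ** C) *v v = l *\<^sub>R v"
    using assms by (auto simp: gram_eigenvalues_def)
  then have "l * inner v v = inner ((transpose C ** C) *v v) v"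
    by simp
  also have "\<dots> = inner (C *v v) (C *v v)"
    by (rule inner_gram_matrix)
  finally have "0 \<le> l * inner v v" by simp
  moreover have "0 < inner v v" using v(1) by simp
  ultimately show ?thesis by (simp add: zero_le_mult_iff)
qed

lemma gram_eigenvectors_orthogonal:
  fixes C :: "real^'n^'m"
  assumes "(transpose C ** C) *v v = l *\<^sub>R v" "(transpose C ** C) *v w = k *\<^sub>R w" "l \<noteq> k"
  shows "orthogonal v w"
proof -
  have "l * inner v w = inner ((transpose C ** C) *v v) w"
    using assms(1) by simp
  also have "\<dots> = inner (C *v v) (C *v w)"
    by (rule inner_gram_matrix)
  also have "\<dots> = inner (C *v w) (C *v v)"
    by (rule inner_commute)
  also have "\<dots> = inner ((transpose C ** C) *v w) v"
    by (rule inner_gram_matrix[symmetric])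
  also have "\<dots> = k * inner v w"
    using assms(2) by (simp add: inner_commute)
  finally show ?thesis using assms(3) by (simp add: orthogonal_def)
qed

lemma finite_gram_eigenvalues: "finite (gram_eigenvalues C)"
proof -
  let ?G = "gram_eigenvalues C"
  define vec where "vec l = (SOME v. v \<noteq> 0 \<and> (transpose C ** C) *v v = l *\<^sub>R v)" for l
  have vec: "vec l \<noteq> 0 \<and> (transpose C ** C) *v vec l = l *\<^sub>R vec l" if "l \<in> ?G" for l
  proof -
    have "\<exists>v. v \<noteq> 0 \<and> (transpose C ** C) *v v = l *\<^sub>R v"
      using that by (simp add: gram_eigenvalues_def)
    then show ?thesis unfolding vec_def by (rule someI_ex)
  qed
  have inj: "inj_on vec ?G"
  proof (rule inj_onI)
    fix l k assume lk: "l \<in> ?G" "k \<in> ?G" "vec l = vec k"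
    have "l *\<^sub>R vec l = (transpose C ** C) *v vec l" using vec[OF lk(1)] by simp
    also have "\<dots> = k *\<^sub>R vec l" using vec[OF lk(2)] lk(3) by simp
    finally show "l = k" using vec[OF lk(1)] by simp
  qed
  have "pairwise orthogonal (vec ` ?G)"
  proof (rule pairwiseI)
    fix u v assume "u \<in> vec ` ?G" "v \<in> vec ` ?G" "u \<noteq> v"
    then obtain l k where lk: "l \<in> ?G" "k \<in> ?G" "u = vec l" "v = vec k" "l \<noteq> k"
      by blast
    show "orthogonal u v"
      unfolding lk(3,4) using vec[OF lk(1)] vec[OF lk(2)] lk(5)
      by (simp add: gram_eigenvectors_orthogonal[of C "vec l" l "vec k" k])
  qed
  moreover have "0 \<notin> vec ` ?G" using vec by auto
  ultimately have "independent (vec ` ?G)"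
    using pairwise_orthogonal_independent by blast
  then have "finite (vec ` ?G)"
    using independent_bound by blast
  with inj show ?thesis
    using finite_imageD by blast
qed

lemma finite_singular_values: "finite (singular_values C)"
  by (simp add: singular_values_eq_sqrt_gram_eigenvalues finite_gram_eigenvalues)

lemma sqrt_gram_eigenvalue_le_sigma_max:
  assumes "l \<in> gram_eigenvalues C"
  shows "sqrt l \<le> sigma_max C"
  unfolding sigma_max_def
  by (rule Max_ge[OF finite_singular_values])
    (simp add: singular_values_eq_sqrt_gram_eigenvalues assms)

lemma sigma_min_nz_sq_le_gram_eigenvalue:
  assumes "l \<in> gram_eigenvalues C" "0 < l"
  shows "(sigma_min_nz C)^2 \<le> l"
proof -
  have fin: "finite (singular_values C - {0})"
    using finite_singular_values by blast
  have mem: "sqrt l \<in> singular_values C - {0}"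
    using assms by (simp add: singular_values_eq_sqrt_gram_eigenvalues)
  have "sigma_min_nz C \<in> singular_values C - {0}"
    unfolding sigma_min_nz_def using Min_in[OF fin] mem by blast
  then obtain k where "k \<in> gram_eigenvalues C" "sigma_min_nz C = sqrt k"
    by (auto simp: singular_values_eq_sqrt_gram_eigenvalues)
  then have "0 \<le> sigma_min_nz C"
    using gram_eigenvalue_nonneg by simp
  moreover have "sigma_min_nz C \<le> sqrt l"
    unfolding sigma_min_nz_def using fin mem by (rule Min_le)
  ultimately have "(sigma_min_nz C)^2 \<le> (sqrt l)^2"
    by (simp add: power_mono)
  with assms(2) show ?thesis by simp
qed

lemma max_gram_eigenvalue_exists:
  fixes C :: "real^'n^'m"
  shows "\<exists>l\<in>gram_eigenvalues C. \<forall>x. (norm (C *v x))^2 \<le> l * (norm x)^2"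
proof -
  obtain w where w: "norm w = 1" and max: "\<And>x. (norm (C *v x))^2 \<le> (norm (C *v w))^2 * (norm x)^2"
    using rayleigh_max_attained[OF subspace_UNIV, of "axis undefined 1" C] by auto
  have "(transpose C ** C) *v w = (norm (C *v w))^2 *\<^sub>R w"
  proof (rule rayleigh_extremum_eigenvector[where W = UNIV and s = "-1"])
    show "0 \<le> -1 * ((norm (C *v x))^2 - (norm (C *v w))^2 * (norm x)^2)" for x
      using max[of x] by simp
  qed (simp_all add: w)
  moreover have "w \<noteq> 0" using w by auto
  ultimately have "(norm (C *v w))^2 \<in> gram_eigenvalues C"
    unfolding gram_eigenvalues_def by blast
  with max show ?thesis by blast
qed

lemma sigma_max_nonneg: "0 \<le> sigma_max C"
proof -
  obtain l where l: "l \<in> gram_eigenvalues C"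
    using max_gram_eigenvalue_exists by blast
  have "0 \<le> sqrt l" using gram_eigenvalue_nonneg[OF l] by simp
  also have "\<dots> \<le> sigma_max C" using l by (rule sqrt_gram_eigenvalue_le_sigma_max)
  finally show ?thesis .
qed

lemma norm_matrix_vector_sq_le_sigma_max:
  "(norm (C *v x))^2 \<le> (sigma_max C)^2 * (norm x)^2"
proof -
  obtain l where l: "l \<in> gram_eigenvalues C" and max: "(norm (C *v x))^2 \<le> l * (norm x)^2"
    using max_gram_eigenvalue_exists by blast
  have "(sqrt l)^2 \<le> (sigma_max C)^2"
    using l gram_eigenvalue_nonneg[OF l]
    by (intro power_mono sqrt_gram_eigenvalue_le_sigma_max) simp_all
  then have "l \<le> (sigma_max C)^2"
    using gram_eigenvalue_nonneg[OF l] by simp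
  then have "l * (norm x)^2 \<le> (sigma_max C)^2 * (norm x)^2"
    by (rule mult_right_mono) simp
  with max show ?thesis by (rule order_trans)
qed

lemma norm_matrix_vector_le_sigma_max: "norm (C *v x) \<le> sigma_max C * norm x"
  by (rule power2_le_imp_le)
    (simp_all add: power_mult_distrib norm_matrix_vector_sq_le_sigma_max sigma_max_nonneg)

lemma norm_transpose_matrix_vector_le_sigma_max:
  "norm (transpose C *v y) \<le> sigma_max C * norm y"
proof (cases "transpose C *v y = 0")
  case False
  let ?z = "transpose C *v y"
  have "norm ?z * norm ?z = inner (C *v ?z) y"
    by (simp add: inner_matrix_vector_transpose flip: power2_eq_square power2_norm_eq_inner)
  also have "\<dots> \<le> norm (C *v ?z) * norm y"
    by (rule norm_cauchy_schwarz)
  also have "\<dots> \<le> (sigma_max C * norm ?z) * norm y"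
    by (rule mult_right_mono) (simp_all add: norm_matrix_vector_le_sigma_max)
  also have "\<dots> = (sigma_max C * norm y) * norm ?z"
    by (simp only: mult_ac)
  finally have "norm ?z * norm ?z \<le> (sigma_max C * norm y) * norm ?z" .
  moreover have "0 < norm ?z" using False by simp
  ultimately show ?thesis by (rule mult_right_le_imp_le)
qed (simp add: sigma_max_nonneg)

text \<open>A minimiser \<open>w\<close> of \<open>\<parallel>A\<^sup>T w\<parallel>\<close> on the unit sphere of the range of \<open>A\<close> is an
  eigenvector of \<open>A A\<^sup>T\<close>, hence \<open>A\<^sup>T w\<close> is an eigenvector of \<open>A\<^sup>T A\<close> for the same
  eigenvalue.\<close>
lemma sigma_min_nz_sq_mult_le_norm_transpose:
  fixes A :: "real^'n^'m"
  assumes "A \<noteq> 0" and r: "r \<in> range (\<lambda>x. A *v x)"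
  shows "(sigma_min_nz A)^2 * (norm r)^2 \<le> (norm (transpose A *v r))^2"
proof -
  let ?W = "range (\<lambda>x. A *v x)"
  have W: "subspace ?W"
    by (simp add: linear_subspace_image matrix_vector_mul_linear)
  obtain x0 where "A *v x0 \<noteq> 0"
    using assms(1) matrix_eq[of A 0] by auto
  then obtain w where w: "w \<in> ?W" "norm w = 1"
    and min: "\<And>x. x \<in> ?W \<Longrightarrow> (norm (transpose A *v w))^2 * (norm x)^2 \<le> (norm (transpose A *v x))^2"
    using rayleigh_min_attained[OF W, of "A *v x0" "transpose A"] by blast
  define l where "l = (norm (transpose A *v w))^2"
  have "(transpose (transpose A) ** transpose A) *v w = l *\<^sub>R w"
  proof (rule rayleigh_extremum_eigenvector[where W = ?W and s = 1])
    show "0 \<le> 1 * ((norm (transpose A *v x))^2 - l * (norm x)^2)" if "x \<in> ?W" for x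
      using min[OF that] by (simp add: l_def)
    show "(transpose (transpose A) ** transpose A) *v w \<in> ?W"
      by (simp flip: matrix_vector_mul_assoc)
  qed (use W w in \<open>simp_all add: l_def\<close>)
  then have AAw: "A *v (transpose A *v w) = l *\<^sub>R w"
    by (simp only: transpose_transpose matrix_vector_mul_assoc)
  have "0 < l"
  proof (rule ccontr)
    assume "\<not> 0 < l"
    then have "transpose A *v w = 0" by (simp add: l_def)
    moreover obtain y where "w = A *v y" using w(1) by blast
    ultimately have "inner w w = 0" by (simp add: inner_matrix_vector_transpose)
    with w(2) show False by simp
  qed
  have "transpose A *v w \<noteq> 0"
    using \<open>0 < l\<close> by (auto simp: l_def)
  moreover have "(transpose A ** A) *v (transpose A *v w) = l *\<^sub>R (transpose A *v w)"
    by (simp only: AAw matrix_vector_mul_assoc[symmetric] matrix_vector_mult_scaleR)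
  ultimately have "l \<in> gram_eigenvalues A"
    unfolding gram_eigenvalues_def by blast
  then have "(sigma_min_nz A)^2 \<le> l"
    using \<open>0 < l\<close> by (rule sigma_min_nz_sq_le_gram_eigenvalue)
  then have "(sigma_min_nz A)^2 * (norm r)^2 \<le> l * (norm r)^2"
    by (rule mult_right_mono) simp
  also have "\<dots> \<le> (norm (transpose A *v r))^2"
    using min[OF r] by (simp add: l_def)
  finally show ?thesis .
qed

lemma sum_partition_on:
  assumes P: "partition_on A P" and "finite A"
  shows "(\<Sum>X\<in>P. \<Sum>x\<in>X. f x) = (\<Sum>x\<in>A. f x)"
proof -
  have "\<forall>X\<in>P. finite X"
    using assms by (metis Union_upper finite_subset partition_onD1)
  moreover have "\<forall>X\<in>P. \<forall>Y\<in>P. X \<noteq> Y \<longrightarrow> X \<inter> Y = {}"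
    using partition_onD2[OF P] by (auto simp: disjoint_def)
  ultimately have "(\<Sum>x\<in>\<Union>P. f x) = (\<Sum>X\<in>P. \<Sum>x\<in>X. f x)"
    by (simp add: sum.Union_disjoint)
  then show ?thesis using partition_onD1[OF P] by simp
qed

lemma sum_partition_on_blocks:
  assumes "partition_on A RP" "partition_on B CP" "finite A" "finite B"
  shows "(\<Sum>I\<in>RP. \<Sum>J\<in>CP. \<Sum>i\<in>I. \<Sum>j\<in>J. f i j) = (\<Sum>i\<in>A. \<Sum>j\<in>B. f i j)"
proof -
  have "(\<Sum>I\<in>RP. \<Sum>J\<in>CP. \<Sum>i\<in>I. \<Sum>j\<in>J. f i j) = (\<Sum>I\<in>RP. \<Sum>i\<in>I. \<Sum>J\<in>CP. \<Sum>j\<in>J. f i j)"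
    by (intro sum.cong refl sum.swap)
  also have "\<dots> = (\<Sum>i\<in>A. \<Sum>j\<in>B. f i j)"
    using assms by (simp add: sum_partition_on)
  finally show ?thesis .
qed

lemma sum_if_mem_times:
  fixes f :: "'a::finite \<Rightarrow> 'b::finite \<Rightarrow> 'c::comm_monoid_add"
  shows "(\<Sum>i\<in>UNIV. \<Sum>j\<in>UNIV. if i \<in> I \<and> j \<in> J then f i j else 0) = (\<Sum>i\<in>I. \<Sum>j\<in>J. f i j)"
proof -
  have "(\<Sum>i\<in>UNIV. \<Sum>j\<in>UNIV. if i \<in> I \<and> j \<in> J then f i j else 0)
      = (\<Sum>i\<in>UNIV. if i \<in> I then (\<Sum>j\<in>UNIV. if j \<in> J then f i j else 0) else 0)"
    by (intro sum.cong) auto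
  then show ?thesis by (simp add: sum.inter_restrict[symmetric])
qed

lemma norm_vec_sq: "(norm x)^2 = (\<Sum>i\<in>UNIV. (x $ i)^2)"
  unfolding power2_norm_eq_inner inner_vec_def by (simp add: power2_eq_square)

lemma frob_norm_sq: "(frob_norm C)^2 = (\<Sum>i\<in>UNIV. \<Sum>j\<in>UNIV. (C $ i $ j)^2)"
  by (simp add: frob_norm_def sum_nonneg)

lemma frob_norm_eq_0_iff: "frob_norm C = 0 \<longleftrightarrow> C = 0"
proof -
  have "frob_norm C = 0 \<longleftrightarrow> (\<forall>i j. (C $ i $ j)^2 = 0)"
    by (simp add: frob_norm_def sum_nonneg sum_nonneg_eq_0_iff)
  then show ?thesis by (simp add: vec_eq_iff)
qed

lemma frob_norm_0 [simp]: "frob_norm 0 = 0"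
  by (simp add: frob_norm_eq_0_iff)

lemma frob_norm_sq_pos: "C \<noteq> 0 \<Longrightarrow> 0 < (frob_norm C)^2"
  by (simp add: frob_norm_eq_0_iff)

lemma norm_matrix_vector_sq_le_frob_norm:
  "(norm (C *v y))^2 \<le> (frob_norm C)^2 * (norm y)^2"
proof -
  have "(norm (C *v y))^2 = (\<Sum>i\<in>UNIV. (\<Sum>j\<in>UNIV. C $ i $ j * y $ j)^2)"
    by (simp add: norm_vec_sq matrix_vector_mult_def)
  also have "\<dots> \<le> (\<Sum>i\<in>UNIV. (\<Sum>j\<in>UNIV. (C $ i $ j)^2) * (\<Sum>j\<in>UNIV. (y $ j)^2))"
    by (intro sum_mono Cauchy_Schwarz_ineq_sum)
  also have "\<dots> = (frob_norm C)^2 * (norm y)^2"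
    by (simp add: frob_norm_sq norm_vec_sq sum_distrib_right)
  finally show ?thesis .
qed

lemma frob_norm_block_sq: "(frob_norm (block A I J))^2 = (\<Sum>i\<in>I. \<Sum>j\<in>J. (A $ i $ j)^2)"
proof -
  have "(frob_norm (block A I J))^2 = (\<Sum>i\<in>UNIV. \<Sum>j\<in>UNIV. if i \<in> I \<and> j \<in> J then (A $ i $ j)^2 else 0)"
    unfolding frob_norm_sq block_def by (intro sum.cong) auto
  then show ?thesis by (simp only: sum_if_mem_times)
qed

lemma sum_frob_norm_block_sq:
  assumes "partition_on UNIV RP" "partition_on UNIV CP"
  shows "(\<Sum>I\<in>RP. \<Sum>J\<in>CP. (frob_norm (block A I J))^2) = (frob_norm A)^2"
  unfolding frob_norm_block_sq frob_norm_sq[of A]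
  using assms by (rule sum_partition_on_blocks) simp_all

lemma block_UNIV [simp]: "block A UNIV UNIV = A"
  by (simp add: block_def vec_eq_iff)

lemma inner_transpose_block:
  "inner (transpose (block A I J) *v r) v = (\<Sum>i\<in>I. \<Sum>j\<in>J. r $ i * A $ i $ j * v $ j)"
proof -
  have "inner (transpose (block A I J) *v r) v = inner r (block A I J *v v)"
    by (metis inner_commute inner_matrix_vector_transpose)
  also have "\<dots> = (\<Sum>i\<in>UNIV. \<Sum>j\<in>UNIV. if i \<in> I \<and> j \<in> J then r $ i * A $ i $ j * v $ j else 0)"
    unfolding inner_vec_def matrix_vector_mult_def block_def
    by (auto simp: sum_distrib_left intro!: sum.cong)
  finally show ?thesis by (simp only: sum_if_mem_times)
qed

lemma sum_inner_transpose_block: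
  assumes "partition_on UNIV RP" "partition_on UNIV CP"
  shows "(\<Sum>I\<in>RP. \<Sum>J\<in>CP. inner (transpose (block A I J) *v r) v) = inner (transpose A *v r) v"
proof -
  have "(\<Sum>I\<in>RP. \<Sum>J\<in>CP. inner (transpose (block A I J) *v r) v)
      = (\<Sum>i\<in>UNIV. \<Sum>j\<in>UNIV. r $ i * A $ i $ j * v $ j)"
    unfolding inner_transpose_block using assms by (rule sum_partition_on_blocks) simp_all
  also have "\<dots> = inner (transpose A *v r) v"
    using inner_transpose_block[of A UNIV UNIV r v] by (simp only: block_UNIV)
  finally show ?thesis .
qed

definition restrict_vec :: "'m set \<Rightarrow> real^'m \<Rightarrow> real^'m" where
  "restrict_vec I r = (\<chi> i. if i \<in> I then r $ i else 0)"

lemma transpose_block_restrict_vec: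
  "transpose (block A I J) *v restrict_vec I r = transpose (block A I J) *v r"
  unfolding restrict_vec_def block_def
  by (auto simp: vec_eq_iff matrix_vector_mult_def transpose_def intro!: sum.cong)

lemma sum_norm_restrict_vec_sq:
  assumes "partition_on UNIV RP"
  shows "(\<Sum>I\<in>RP. (norm (restrict_vec I r))^2) = (norm r)^2"
proof -
  have "(restrict_vec I r $ i)^2 = (if i \<in> I then (r $ i)^2 else 0)" for I i
    by (simp add: restrict_vec_def)
  then have "(norm (restrict_vec I r))^2 = (\<Sum>i\<in>I. (r $ i)^2)" for I
    by (simp add: norm_vec_sq sum.inter_restrict[symmetric])
  then show ?thesis
    using sum_partition_on[OF assms] by (simp add: norm_vec_sq)
qed

lemma transpose_block_vector_outside:
  "j \<notin> J \<Longrightarrow> (transpose (block A I J) *v r) $ j = 0"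
  by (simp add: block_def matrix_vector_mult_def transpose_def)

lemma matrix_vector_mult_supported:
  assumes "\<And>j. j \<notin> J \<Longrightarrow> y $ j = 0"
  shows "A *v y = block A UNIV J *v y"
  using assms by (auto simp: block_def vec_eq_iff matrix_vector_mult_def intro!: sum.cong)

lemma expectation_bind_pmf:
  fixes \<phi> :: "'b \<Rightarrow> real"
  assumes nonneg: "\<And>y. 0 \<le> \<phi> y" and fin: "\<And>x. finite (set_pmf (N x))"
  shows "measure_pmf.expectation (bind_pmf M N) \<phi>
       = measure_pmf.expectation M (\<lambda>x. measure_pmf.expectation (N x) \<phi>)"
proof -
  have inner: "(\<integral>\<^sup>+ y. ennreal (\<phi> y) \<partial>N x) = ennreal (measure_pmf.expectation (N x) \<phi>)" for x
    by (rule nn_integral_eq_integral) (auto simp: nonneg intro: integrable_measure_pmf_finite fin)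
  have "measure_pmf.expectation (bind_pmf M N) \<phi> = enn2real (\<integral>\<^sup>+ y. ennreal (\<phi> y) \<partial>bind_pmf M N)"
    by (rule integral_eq_nn_integral) (auto simp: nonneg)
  also have "\<dots> = enn2real (\<integral>\<^sup>+ x. ennreal (measure_pmf.expectation (N x) \<phi>) \<partial>M)"
    by (simp add: inner)
  also have "\<dots> = measure_pmf.expectation M (\<lambda>x. measure_pmf.expectation (N x) \<phi>)"
    by (rule integral_eq_nn_integral[symmetric]) (auto simp: nonneg)
  finally show ?thesis .
qed

lemma expectation_kernel_iterate_le:
  fixes \<phi> :: "'a \<Rightarrow> real" and K :: "'a \<Rightarrow> 'a pmf" and M :: "nat \<Rightarrow> 'a pmf"
  assumes nonneg: "\<And>x. 0 \<le> \<phi> x" and fin: "\<And>x. finite (set_pmf (K x))"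
    and contraction: "\<And>x. measure_pmf.expectation (K x) \<phi> \<le> c * \<phi> x"
    and M_0: "M 0 = return_pmf x0" and M_Suc: "\<And>k. M (Suc k) = bind_pmf (M k) K"
  shows "measure_pmf.expectation (M k) \<phi> \<le> c ^ k * \<phi> x0"
proof (cases "0 \<le> c")
  case True
  have fin_M: "finite (set_pmf (M k))" for k
    by (induction k) (simp_all add: M_0 M_Suc fin)
  show ?thesis
  proof (induction k)
    case 0
    show ?case by (simp add: M_0)
  next
    case (Suc k)
    have "measure_pmf.expectation (M (Suc k)) \<phi>
        = measure_pmf.expectation (M k) (\<lambda>x. measure_pmf.expectation (K x) \<phi>)"
      unfolding M_Suc using nonneg fin by (rule expectation_bind_pmf)
    also have "\<dots> \<le> measure_pmf.expectation (M k) (\<lambda>x. c * \<phi> x)"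
      by (intro integral_mono integrable_measure_pmf_finite fin_M contraction)
    also have "\<dots> = c * measure_pmf.expectation (M k) \<phi>"
      by simp
    also have "\<dots> \<le> c * (c ^ k * \<phi> x0)"
      using Suc True by (rule mult_left_mono)
    finally show ?case by simp
  qed
next
  case False
  have "\<phi> x = 0" for x
  proof -
    have "0 \<le> measure_pmf.expectation (K x) \<phi>"
      by (simp add: nonneg)
    then have "0 \<le> c * \<phi> x"
      using contraction[of x] by linarith
    with False nonneg[of x] show ?thesis
      by (simp add: zero_le_mult_iff)
  qed
  then have "\<phi> = (\<lambda>_. 0)" by blast
  then show ?thesis by simp
qed

lemma pmf_block_pmf:
  assumes A: "A \<noteq> 0" and RP: "partition_on UNIV RP" and CP: "partition_on UNIV CP"
  shows "pmf (block_pmf A RP CP) (I, J) =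
    (if I \<in> RP \<and> J \<in> CP then (frob_norm (block A I J))^2 / (frob_norm A)^2 else 0)"
proof -
  define f where "f = (\<lambda>(I, J).
    if I \<in> RP \<and> J \<in> CP then (frob_norm (block A I J))^2 / (frob_norm A)^2 else 0)"
  have nonneg: "0 \<le> f p" for p
    by (auto simp: f_def split: prod.splits)
  have "(\<Sum>p\<in>UNIV. f p)
      = (\<Sum>p\<in>UNIV. if p \<in> RP \<times> CP then (\<lambda>(I, J). (frob_norm (block A I J))^2 / (frob_norm A)^2) p else 0)"
    unfolding f_def by (intro sum.cong) (auto split: if_splits)
  also have "\<dots> = (\<Sum>(I, J)\<in>RP \<times> CP. (frob_norm (block A I J))^2 / (frob_norm A)^2)"
    by (simp only: sum.inter_restrict[symmetric] finite Int_UNIV_left)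
  also have "\<dots> = (\<Sum>I\<in>RP. \<Sum>J\<in>CP. (frob_norm (block A I J))^2) / (frob_norm A)^2"
    by (simp only: sum.cartesian_product[symmetric] sum_divide_distrib)
  also have "\<dots> = 1"
    using frob_norm_sq_pos[OF A] by (simp add: sum_frob_norm_block_sq[OF RP CP])
  finally have "(\<integral>\<^sup>+p. ennreal (f p) \<partial>count_space UNIV) = 1"
    using nonneg by (simp add: nn_integral_count_space_finite)
  then have "pmf (block_pmf A RP CP) (I, J) = f (I, J)"
    unfolding block_pmf_def f_def[symmetric] by (rule pmf_embed_pmf[OF nonneg])
  then show ?thesis by (simp add: f_def)
qed

lemma expectation_block_pmf:
  assumes "A \<noteq> 0" "partition_on UNIV RP" "partition_on UNIV CP"
  shows "measure_pmf.expectation (block_pmf A RP CP) f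
    = (\<Sum>I\<in>RP. \<Sum>J\<in>CP. (frob_norm (block A I J))^2 * f (I, J)) / (frob_norm A)^2"
proof -
  have "measure_pmf.expectation (block_pmf A RP CP) f = (\<Sum>p\<in>RP \<times> CP. f p * pmf (block_pmf A RP CP) p)"
  proof (rule integral_measure_pmf_real)
    show "p \<in> RP \<times> CP" if "p \<in> set_pmf (block_pmf A RP CP)" for p
      using that pmf_block_pmf[OF assms, of "fst p" "snd p"]
      by (cases p) (auto simp: set_pmf_iff split: if_splits)
  qed simp
  also have "\<dots> = (\<Sum>(I, J)\<in>RP \<times> CP. (frob_norm (block A I J))^2 * f (I, J) / (frob_norm A)^2)"
    by (intro sum.cong) (auto simp: pmf_block_pmf[OF assms])
  finally show ?thesis
    by (simp only: sum.cartesian_product[symmetric] sum_divide_distrib)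
qed

lemma sigma_max_block_sq_le_dsbgs_beta:
  assumes "I \<in> RP" "J \<in> CP" "block A I J \<noteq> 0"
  shows "(sigma_max (block A I J))^2 \<le> dsbgs_beta A RP CP * (frob_norm (block A I J))^2"
proof -
  let ?ratio = "\<lambda>I J. (sigma_max (block A I J))^2 / (frob_norm (block A I J))^2"
  let ?S = "{?ratio I J | I J. I \<in> RP \<and> J \<in> CP \<and> block A I J \<noteq> 0}"
  have "?S \<subseteq> (\<lambda>(I, J). ?ratio I J) ` UNIV" by auto
  then have "finite ?S" by (rule finite_subset) simp
  moreover have "?ratio I J \<in> ?S" using assms by blast
  ultimately have "?ratio I J \<le> dsbgs_beta A RP CP"
    unfolding dsbgs_beta_def by (rule Max_ge)
  with frob_norm_sq_pos[OF assms(3)] show ?thesis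
    by (simp add: pos_divide_le_eq)
qed

lemma dsbgs_beta_nonneg:
  assumes A: "A \<noteq> 0" and RP: "partition_on UNIV RP" and CP: "partition_on UNIV CP"
  shows "0 \<le> dsbgs_beta A RP CP"
proof -
  obtain I J where IJ: "I \<in> RP" "J \<in> CP" "block A I J \<noteq> 0"
  proof (rule ccontr)
    assume "\<not> thesis"
    with that have "\<forall>I\<in>RP. \<forall>J\<in>CP. block A I J = 0" by blast
    then have "(frob_norm A)^2 = 0"
      using sum_frob_norm_block_sq[OF RP CP, of A] by (simp add: frob_norm_eq_0_iff)
    with frob_norm_sq_pos[OF A] show False by simp
  qed
  have "0 \<le> (sigma_max (block A I J))^2" by simp
  also have "\<dots> \<le> dsbgs_beta A RP CP * (frob_norm (block A I J))^2"
    using IJ by (rule sigma_max_block_sq_le_dsbgs_beta)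
  finally show ?thesis
    using frob_norm_sq_pos[OF IJ(3)] by (simp add: zero_le_mult_iff)
qed

lemma sigma_max_column_block_sq_le_dsbgs_rho:
  assumes "J \<in> CP"
  shows "(sigma_max (block A UNIV J))^2 \<le> dsbgs_rho A CP"
proof -
  have "finite {(sigma_max (block A UNIV J))^2 | J. J \<in> CP}"
    by (simp add: setcompr_eq_image)
  moreover have "(sigma_max (block A UNIV J))^2 \<in> {(sigma_max (block A UNIV J))^2 | J. J \<in> CP}"
    using assms by blast
  ultimately show ?thesis
    unfolding dsbgs_rho_def by (rule Max_ge)
qed

lemma dsbgs_step_residual:
  "A *v dsbgs_step A b \<alpha> I J x - b
    = (A *v x - b) + (- (\<alpha> / (frob_norm (block A I J))^2)) *\<^sub>R (A *v (transpose (block A I J) *v (A *v x - b)))"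
  unfolding dsbgs_step_def by (simp add: matrix_vector_mult_diff_distrib algebra_simps)

lemma dsbgs_step_residual_weighted_le:
  fixes A :: "real^'n^'m" and b :: "real^'m" and x :: "real^'n"
    and I :: "'m set" and J :: "'n set" and \<beta> g :: real
  defines "r \<equiv> A *v x - b" and "F \<equiv> (frob_norm (block A I J))^2"
  assumes beta: "block A I J \<noteq> 0 \<Longrightarrow> (sigma_max (block A I J))^2 \<le> \<beta> * F" and "0 \<le> \<beta>"
    and "0 \<le> g" and column: "\<And>y. (\<And>j. j \<notin> J \<Longrightarrow> y $ j = 0) \<Longrightarrow> (norm (A *v y))^2 \<le> g * (norm y)^2"
  shows "F * (norm (A *v dsbgs_step A b \<alpha> I J x - b))^2
    \<le> F * (norm r)^2 - 2 * \<alpha> * inner (transpose (block A I J) *v r) (transpose A *v r)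
      + \<alpha>^2 * \<beta> * g * (norm (restrict_vec I r))^2"
proof (cases "block A I J = 0")
  case True
  have "0 \<le> \<alpha>^2 * \<beta> * g * (norm (restrict_vec I r))^2"
    using \<open>0 \<le> \<beta>\<close> \<open>0 \<le> g\<close> by simp
  with True show ?thesis by (simp add: F_def)
next
  case False
  define y where "y = transpose (block A I J) *v r"
  define R where "R = (norm (restrict_vec I r))^2"
  have F: "0 < F" unfolding F_def using False by (rule frob_norm_sq_pos)
  have "norm y \<le> sigma_max (block A I J) * norm (restrict_vec I r)"
    using norm_transpose_matrix_vector_le_sigma_max[of "block A I J" "restrict_vec I r"]
    unfolding y_def transpose_block_restrict_vec .
  then have "(norm y)^2 \<le> (sigma_max (block A I J))^2 * R"
    unfolding R_def by (simp add: power_mono flip: power_mult_distrib)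
  also have "\<dots> \<le> \<beta> * F * R"
    using beta[OF False] by (rule mult_right_mono) (simp add: R_def)
  finally have y_le: "(norm y)^2 \<le> \<beta> * F * R" .
  have "(norm (A *v y))^2 \<le> g * (norm y)^2"
    unfolding y_def by (rule column) (rule transpose_block_vector_outside)
  also have "\<dots> \<le> g * (\<beta> * F * R)"
    using y_le \<open>0 \<le> g\<close> by (rule mult_left_mono)
  finally have Ay_le: "(norm (A *v y))^2 \<le> g * (\<beta> * F * R)" .
  have "inner r (A *v y) = inner y (transpose A *v r)"
    by (metis inner_commute inner_matrix_vector_transpose)
  then have "(norm (A *v dsbgs_step A b \<alpha> I J x - b))^2
      = (norm r)^2 - 2 * (\<alpha> / F) * inner y (transpose A *v r) + (\<alpha> / F)^2 * (norm (A *v y))^2"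
    unfolding dsbgs_step_residual r_def[symmetric] F_def[symmetric] y_def[symmetric] norm_add_scaleR_sq
    by simp
  then have "F * (norm (A *v dsbgs_step A b \<alpha> I J x - b))^2
      = F * (norm r)^2 - 2 * \<alpha> * inner y (transpose A *v r) + \<alpha>^2 / F * (norm (A *v y))^2"
    using F by (simp add: field_simps power2_eq_square)
  also have "\<dots> \<le> F * (norm r)^2 - 2 * \<alpha> * inner y (transpose A *v r) + \<alpha>^2 / F * (g * (\<beta> * F * R))"
    by (intro add_left_mono mult_left_mono Ay_le) (use F in simp)
  also have "\<alpha>^2 / F * (g * (\<beta> * F * R)) = \<alpha>^2 * \<beta> * g * R"
    using F by (simp add: field_simps)
  finally show ?thesis
    unfolding y_def R_def .
qed

lemma sum_block_residual_bounds:
  assumes RP: "partition_on UNIV RP" and CP: "partition_on UNIV CP"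
  shows "(\<Sum>I\<in>RP. \<Sum>J\<in>CP. (frob_norm (block A I J))^2 * (norm r)^2
      - 2 * \<alpha> * inner (transpose (block A I J) *v r) (transpose A *v r)
      + \<alpha>^2 * \<beta> * g J * (norm (restrict_vec I r))^2)
    = (frob_norm A)^2 * (norm r)^2 - 2 * \<alpha> * inner (transpose A *v r) (transpose A *v r)
      + \<alpha>^2 * \<beta> * ((norm r)^2 * (\<Sum>J\<in>CP. g J))"
proof -
  have "(\<Sum>I\<in>RP. \<Sum>J\<in>CP. (frob_norm (block A I J))^2 * (norm r)^2
      - 2 * \<alpha> * inner (transpose (block A I J) *v r) (transpose A *v r)
      + \<alpha>^2 * \<beta> * g J * (norm (restrict_vec I r))^2)
    = (\<Sum>I\<in>RP. \<Sum>J\<in>CP. (frob_norm (block A I J))^2) * (norm r)^2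
      - 2 * \<alpha> * (\<Sum>I\<in>RP. \<Sum>J\<in>CP. inner (transpose (block A I J) *v r) (transpose A *v r))
      + \<alpha>^2 * \<beta> * ((\<Sum>I\<in>RP. (norm (restrict_vec I r))^2) * (\<Sum>J\<in>CP. g J))"
    by (simp add: sum.distrib sum_subtractf sum_distrib_left sum_distrib_right sum_product algebra_simps)
  then show ?thesis
    unfolding sum_frob_norm_block_sq[OF RP CP] sum_inner_transpose_block[OF RP CP]
      sum_norm_restrict_vec_sq[OF RP] .
qed

lemma dsbgs_step_expected_residual_le:
  fixes A :: "real^'n^'m" and g :: "'n set \<Rightarrow> real"
  assumes A: "A \<noteq> 0" and consistent: "\<exists>x. A *v x = b"
    and RP: "partition_on UNIV RP" and CP: "partition_on UNIV CP" and "0 \<le> \<alpha>"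
    and g_nonneg: "\<And>J. J \<in> CP \<Longrightarrow> 0 \<le> g J"
    and column: "\<And>J y. J \<in> CP \<Longrightarrow> (\<And>j. j \<notin> J \<Longrightarrow> y $ j = 0) \<Longrightarrow> (norm (A *v y))^2 \<le> g J * (norm y)^2"
  shows "measure_pmf.expectation (block_pmf A RP CP) (\<lambda>(I, J). (norm (A *v dsbgs_step A b \<alpha> I J x - b))^2)
    \<le> (1 - (2 * \<alpha> * (sigma_min_nz A)^2 - \<alpha>^2 * dsbgs_beta A RP CP * (\<Sum>J\<in>CP. g J)) / (frob_norm A)^2)
       * (norm (A *v x - b))^2"
proof -
  define r where "r = A *v x - b"
  define \<beta> where "\<beta> = dsbgs_beta A RP CP"
  define \<Phi> where "\<Phi> = (frob_norm A)^2"
  define G where "G = (\<Sum>J\<in>CP. g J)"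
  let ?F = "\<lambda>I J. (frob_norm (block A I J))^2"
  have \<Phi>: "0 < \<Phi>" unfolding \<Phi>_def using A by (rule frob_norm_sq_pos)
  have "r \<in> range (\<lambda>x. A *v x)"
    using consistent unfolding r_def by (metis matrix_vector_mult_diff_distrib rangeI)
  then have \<sigma>: "(sigma_min_nz A)^2 * (norm r)^2 \<le> inner (transpose A *v r) (transpose A *v r)"
    by (unfold power2_norm_eq_inner[symmetric]) (rule sigma_min_nz_sq_mult_le_norm_transpose[OF A])
  have "measure_pmf.expectation (block_pmf A RP CP) (\<lambda>(I, J). (norm (A *v dsbgs_step A b \<alpha> I J x - b))^2)
      = (\<Sum>I\<in>RP. \<Sum>J\<in>CP. ?F I J * (norm (A *v dsbgs_step A b \<alpha> I J x - b))^2) / \<Phi>"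
    by (simp add: expectation_block_pmf[OF A RP CP] \<Phi>_def)
  also have "\<dots> \<le> (\<Sum>I\<in>RP. \<Sum>J\<in>CP. ?F I J * (norm r)^2
      - 2 * \<alpha> * inner (transpose (block A I J) *v r) (transpose A *v r)
      + \<alpha>^2 * \<beta> * g J * (norm (restrict_vec I r))^2) / \<Phi>"
    unfolding r_def \<beta>_def using \<Phi>
    by (intro divide_right_mono sum_mono dsbgs_step_residual_weighted_le sigma_max_block_sq_le_dsbgs_beta
        dsbgs_beta_nonneg[OF A RP CP] g_nonneg column) simp_all
  also have "\<dots> = (\<Phi> * (norm r)^2 - 2 * \<alpha> * inner (transpose A *v r) (transpose A *v r)
      + \<alpha>^2 * \<beta> * ((norm r)^2 * G)) / \<Phi>"
    unfolding \<Phi>_def G_def sum_block_residual_bounds[OF RP CP] ..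
  also have "\<dots> \<le> (\<Phi> * (norm r)^2 - 2 * \<alpha> * ((sigma_min_nz A)^2 * (norm r)^2)
      + \<alpha>^2 * \<beta> * ((norm r)^2 * G)) / \<Phi>"
  proof (rule divide_right_mono)
    have "2 * \<alpha> * ((sigma_min_nz A)^2 * (norm r)^2) \<le> 2 * \<alpha> * inner (transpose A *v r) (transpose A *v r)"
      using \<sigma> \<open>0 \<le> \<alpha>\<close> by (intro mult_left_mono) simp_all
    then show "\<Phi> * (norm r)^2 - 2 * \<alpha> * inner (transpose A *v r) (transpose A *v r) + \<alpha>^2 * \<beta> * ((norm r)^2 * G)
        \<le> \<Phi> * (norm r)^2 - 2 * \<alpha> * ((sigma_min_nz A)^2 * (norm r)^2) + \<alpha>^2 * \<beta> * ((norm r)^2 * G)"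
      by linarith
  qed (use \<Phi> in simp)
  also have "\<dots> = (1 - (2 * \<alpha> * (sigma_min_nz A)^2 - \<alpha>^2 * \<beta> * G) / \<Phi>) * (norm r)^2"
    using \<Phi> by (simp add: field_simps)
  finally show ?thesis
    unfolding r_def \<beta>_def \<Phi>_def G_def .
qed

lemma dsbgs_iter_expected_residual_le:
  assumes "\<And>x. measure_pmf.expectation (block_pmf A RP CP)
      (\<lambda>(I, J). (norm (A *v dsbgs_step A b \<alpha> I J x - b))^2) \<le> c * (norm (A *v x - b))^2"
  shows "measure_pmf.expectation (dsbgs_iter A b RP CP \<alpha> x0 k) (\<lambda>x. (norm (A *v x - b))^2)
    \<le> c ^ k * (norm (A *v x0 - b))^2"
proof (rule expectation_kernel_iterate_le)
  show "measure_pmf.expectation (map_pmf (\<lambda>(I, J). dsbgs_step A b \<alpha> I J x) (block_pmf A RP CP))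
      (\<lambda>x. (norm (A *v x - b))^2) \<le> c * (norm (A *v x - b))^2" for x
  proof -
    have "(\<lambda>p. (norm (A *v (case p of (I, J) \<Rightarrow> dsbgs_step A b \<alpha> I J x) - b))^2)
        = (\<lambda>(I, J). (norm (A *v dsbgs_step A b \<alpha> I J x - b))^2)"
      by (simp add: fun_eq_iff split: prod.split)
    with assms[of x] show ?thesis by simp
  qed
qed simp_all

lemma dsbgs_step_expected_residual_le_frob:
  fixes A :: "real^'n^'m"
  assumes A: "A \<noteq> 0" and "\<exists>x. A *v x = b" and "partition_on UNIV RP"
    and CP: "partition_on UNIV CP" and "0 \<le> \<alpha>"
  shows "measure_pmf.expectation (block_pmf A RP CP) (\<lambda>(I, J). (norm (A *v dsbgs_step A b \<alpha> I J x - b))^2)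
    \<le> (1 + dsbgs_beta A RP CP * \<alpha>^2 - 2 * \<alpha> * (sigma_min_nz A)^2 / (frob_norm A)^2)
       * (norm (A *v x - b))^2"
proof -
  let ?g = "\<lambda>J. (frob_norm (block A UNIV J))^2"
  have "partition_on UNIV {UNIV}"
    by (simp add: partition_on_space)
  from sum_frob_norm_block_sq[OF this CP, of A] have "(\<Sum>J\<in>CP. ?g J) = (frob_norm A)^2"
    by simp
  then have rate: "1 - (2 * \<alpha> * (sigma_min_nz A)^2 - \<alpha>^2 * dsbgs_beta A RP CP * (\<Sum>J\<in>CP. ?g J)) / (frob_norm A)^2
      = 1 + dsbgs_beta A RP CP * \<alpha>^2 - 2 * \<alpha> * (sigma_min_nz A)^2 / (frob_norm A)^2"
    using frob_norm_sq_pos[OF A] by (simp add: field_simps)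
  have "measure_pmf.expectation (block_pmf A RP CP) (\<lambda>(I, J). (norm (A *v dsbgs_step A b \<alpha> I J x - b))^2)
    \<le> (1 - (2 * \<alpha> * (sigma_min_nz A)^2 - \<alpha>^2 * dsbgs_beta A RP CP * (\<Sum>J\<in>CP. ?g J)) / (frob_norm A)^2)
       * (norm (A *v x - b))^2"
  proof (rule dsbgs_step_expected_residual_le[OF assms])
    show "(norm (A *v y))^2 \<le> ?g J * (norm y)^2" if "\<And>j. j \<notin> J \<Longrightarrow> y $ j = 0" for J y
    proof -
      have "A *v y = block A UNIV J *v y"
        using that by (rule matrix_vector_mult_supported)
      then show ?thesis by (simp add: norm_matrix_vector_sq_le_frob_norm)
    qed
  qed simp
  then show ?thesis unfolding rate .
qed

lemma dsbgs_step_expected_residual_le_rho: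
  fixes A :: "real^'n^'m"
  assumes "A \<noteq> 0" and "\<exists>x. A *v x = b" and "partition_on UNIV RP"
    and "partition_on UNIV CP" and "0 \<le> \<alpha>"
  shows "measure_pmf.expectation (block_pmf A RP CP) (\<lambda>(I, J). (norm (A *v dsbgs_step A b \<alpha> I J x - b))^2)
    \<le> (1 - (2 * \<alpha> * (sigma_min_nz A)^2
            - real (card CP) * dsbgs_rho A CP * dsbgs_beta A RP CP * \<alpha>^2) / (frob_norm A)^2)
       * (norm (A *v x - b))^2"
proof -
  have "measure_pmf.expectation (block_pmf A RP CP) (\<lambda>(I, J). (norm (A *v dsbgs_step A b \<alpha> I J x - b))^2)
    \<le> (1 - (2 * \<alpha> * (sigma_min_nz A)^2 - \<alpha>^2 * dsbgs_beta A RP CP * (\<Sum>J\<in>CP. dsbgs_rho A CP))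
          / (frob_norm A)^2) * (norm (A *v x - b))^2"
  proof (rule dsbgs_step_expected_residual_le[OF assms])
    fix J assume J: "J \<in> CP"
    show "0 \<le> dsbgs_rho A CP"
      using sigma_max_column_block_sq_le_dsbgs_rho[OF J, of A] by (meson order_trans zero_le_power2)
    fix y :: "real^'n" assume "\<And>j. j \<notin> J \<Longrightarrow> y $ j = 0"
    then have "A *v y = block A UNIV J *v y"
      by (rule matrix_vector_mult_supported)
    then have "(norm (A *v y))^2 \<le> (sigma_max (block A UNIV J))^2 * (norm y)^2"
      by (simp add: norm_matrix_vector_sq_le_sigma_max)
    also have "\<dots> \<le> dsbgs_rho A CP * (norm y)^2"
      using sigma_max_column_block_sq_le_dsbgs_rho[OF J] by (rule mult_right_mono) simp
    finally show "(norm (A *v y))^2 \<le> dsbgs_rho A CP * (norm y)^2" .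
  qed
  then show ?thesis by (simp add: mult_ac)
qed

theorem theorem4:
  fixes A :: "real^'n^'m" and b :: "real^'m" and x0 :: "real^'n"
    and RP :: "'m set set" and CP :: "'n set set" and \<alpha> :: real
  assumes "A \<noteq> 0"
    and "\<exists>x. A *v x = b"
    and "partition_on UNIV RP"
    and "partition_on UNIV CP"
  shows
    "(card CP = CARD('n) \<and> 0 < \<alpha> \<and>
        \<alpha> < 2 * (sigma_min_nz A)^2 / (dsbgs_beta A RP CP * (frob_norm A)^2) \<longrightarrow>
      (\<forall>k::nat. measure_pmf.expectation (dsbgs_iter A b RP CP \<alpha> x0 k) (\<lambda>x. (norm (A *v x - b))^2)
        \<le> (1 + dsbgs_beta A RP CP * \<alpha>^2 - 2 * \<alpha> * (sigma_min_nz A)^2 / (frob_norm A)^2) ^ k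
           * (norm (A *v x0 - b))^2))
   \<and>
    (card CP < CARD('n) \<and> 0 < \<alpha> \<and>
        \<alpha> < 2 * (sigma_min_nz A)^2 / (real (card CP) * dsbgs_rho A CP * dsbgs_beta A RP CP) \<longrightarrow>
      (\<forall>k::nat. measure_pmf.expectation (dsbgs_iter A b RP CP \<alpha> x0 k) (\<lambda>x. (norm (A *v x - b))^2)
        \<le> (1 - (2 * \<alpha> * (sigma_min_nz A)^2
                 - real (card CP) * dsbgs_rho A CP * dsbgs_beta A RP CP * \<alpha>^2) / (frob_norm A)^2) ^ k
           * (norm (A *v x0 - b))^2))"
  using assms
  by (intro conjI impI allI dsbgs_iter_expected_residual_le
      dsbgs_step_expected_residual_le_frob dsbgs_step_expected_residual_le_rho) auto

end
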